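(* Let $P,Q$ be probability measures on $(\mathcal{X},\mathcal{A})$ and $\rho:\mathcal{X}\to[0,1]$ any measurable function. For each $N$, let $m=m_N,n=n_N$ be deterministic positive integers with $N=m+n$, $m\le n$, $m/N\to\pi\in(0,1)$, and let $X_1,\dots,X_m$ i.i.d. $\sim P$ and $Y_1,\dots,Y_n$ i.i.d. $\sim Q$ be independent. Let $\alpha\in(0,1)$ and define $$\hat A_0=\frac1m\sum_{i=1}^m\big(1-\mathbf 1\{\rho(X_i)>1/2\}\big),\qquad \hat A_1=\frac1n\sum_{j=1}^n\mathbf 1\{\rho(Y_j)>1/2\},$$ $$\hat\sigma=\sqrt{\frac{\hat A_0(1-\hat A_0)}{m}+\frac{\hat A_1(1-\hat A_1)}{n}},\qquad \hat\lambda^{\rho}_{\mathrm{bayes}}=\hat A_0+\hat A_1-1-q_{1-\alpha}\hat\sigma,$$ where $q_{1-\alpha}$ is the standard normal $(1-\alpha)$-quantile. Then $\limsup_{N\to\infty}\mathbb{P}(\hat\lambda^{\rho}_{\mathrm{bayes}}>\mathrm{TV}(P,Q))\le\alpha$.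
   Context: $\mathrm{TV}(P,Q)=\sup_{A\in\mathcal{A}}|P(A)-Q(A)|$. *)

theory Defs
  imports "HOL-Probability.Probability"
begin

definition TV :: "'a measure \<Rightarrow> 'a measure \<Rightarrow> real" where
  "TV P Q = (SUP A \<in> sets P. \<bar>measure P A - measure Q A\<bar>)"

definition std_normal_cdf :: "real \<Rightarrow> real" where
  "std_normal_cdf x = measure (density lborel std_normal_density) {..x}"

definition std_normal_quantile :: "real \<Rightarrow> real" where
  "std_normal_quantile p = (THE q. std_normal_cdf q = p)"

text \<open>The plug-in estimator; xs uses indices < m, ys uses indices < n.\<close>
definition A0_hat :: "('a \<Rightarrow> real) \<Rightarrow> nat \<Rightarrow> (nat \<Rightarrow> 'a) \<Rightarrow> real" where
  "A0_hat \<rho> m xs = (\<Sum>i<m. 1 - of_bool (\<rho> (xs i) > 1/2)) / real m"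

definition A1_hat :: "('a \<Rightarrow> real) \<Rightarrow> nat \<Rightarrow> (nat \<Rightarrow> 'a) \<Rightarrow> real" where
  "A1_hat \<rho> n ys = (\<Sum>j<n. of_bool (\<rho> (ys j) > 1/2)) / real n"

definition lambda_bayes_hat ::
  "real \<Rightarrow> ('a \<Rightarrow> real) \<Rightarrow> nat \<Rightarrow> nat \<Rightarrow> (nat \<Rightarrow> 'a) \<Rightarrow> (nat \<Rightarrow> 'a) \<Rightarrow> real" where
  "lambda_bayes_hat \<alpha> \<rho> m n xs ys =
     (let a0 = A0_hat \<rho> m xs; a1 = A1_hat \<rho> n ys;
          \<sigma> = sqrt (a0 * (1 - a0) / real m + a1 * (1 - a1) / real n)
      in a0 + a1 - 1 - std_normal_quantile (1 - \<alpha>) * \<sigma>)"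

definition sample_space :: "'a measure \<Rightarrow> 'a measure \<Rightarrow> nat \<Rightarrow> nat \<Rightarrow> ((nat \<Rightarrow> 'a) \<times> (nat \<Rightarrow> 'a)) measure" where
  "sample_space P Q m n = (PiM {..<m} (\<lambda>_. P)) \<Otimes>\<^sub>M (PiM {..<n} (\<lambda>_. Q))"

end

theory Submission
  imports Defs
begin

(*
  Write B = {rho > 1/2}, p0 = P(complement of B) and p1 = Q(B). The plug-in estimate
  A0_hat + A1_hat - 1 has mean p0 + p1 - 1 = Q(B) - P(B), which is at most TV(P, Q). Hence on the
  event {lambda_hat > TV} the centred statistic T = sqrt N (A0_hat - p0 + A1_hat - p1) exceeds
  q * sqrt N * sigma_hat, where q is the (1 - alpha)-quantile of the standard normal law.
  The summands are bounded, so a third-order Taylor bound on characteristic functions and Levy's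
  continuity theorem show that T converges in law to N(0, tau^2) with
  tau^2 = p0 (1 - p0) / pi + p1 (1 - p1) / (1 - pi), while sqrt N * sigma_hat converges to tau
  in probability. A Slutsky-type estimate then bounds the limsup of P(T > q sqrt N sigma_hat)
  by 1 - Phi(q) = alpha. If tau = 0 both indicators are almost surely constant and the event is null.
*)

section \<open>Standard normal distribution function\<close>

lemma std_normal_cdf_eq_cdf: "std_normal_cdf = cdf std_normal_distribution"
  by (auto simp: std_normal_cdf_def cdf_def)

lemma isCont_std_normal_cdf: "isCont std_normal_cdf x"
proof -
  interpret real_distribution std_normal_distribution by (rule real_dist_normal_dist)
  have "emeasure std_normal_distribution {x} = 0"
    by (subst emeasure_density) (auto simp: nn_integral_indicator_singleton')
  then show ?thesis
    unfolding std_normal_cdf_eq_cdf isCont_cdf by (simp add: measure_def)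
qed

lemma strict_mono_std_normal_cdf: "strict_mono std_normal_cdf"
proof
  fix x y :: real assume "x < y"
  interpret real_distribution std_normal_distribution by (rule real_dist_normal_dist)
  define c where "c = std_normal_density (max \<bar>x\<bar> \<bar>y\<bar>)"
  have "c > 0" by (simp add: c_def std_normal_density_def)
  have density_ge: "c \<le> std_normal_density z" if "z \<in> {x<..y}" for z
  proof -
    have "\<bar>z\<bar> \<le> max \<bar>x\<bar> \<bar>y\<bar>" using that by auto
    then have "z\<^sup>2 \<le> (max \<bar>x\<bar> \<bar>y\<bar>)\<^sup>2"
      by (metis abs_ge_zero power2_abs power_mono)
    then show ?thesis by (auto simp: c_def std_normal_density_def intro!: divide_right_mono)
  qed
  have "ennreal (c * (y - x)) = (\<integral>\<^sup>+ z. ennreal c * indicator {x<..y} z \<partial>lborel)"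
    using \<open>x < y\<close> \<open>c > 0\<close> by (simp add: ennreal_mult nn_integral_cmult_indicator)
  also have "\<dots> \<le> (\<integral>\<^sup>+ z. ennreal (std_normal_density z) * indicator {x<..y} z \<partial>lborel)"
    by (intro nn_integral_mono) (auto split: split_indicator intro!: density_ge)
  also have "\<dots> = emeasure std_normal_distribution {x<..y}"
    by (subst emeasure_density) auto
  finally have "c * (y - x) \<le> measure std_normal_distribution {x<..y}"
    by (simp add: emeasure_eq_measure)
  moreover have "0 < c * (y - x)" using \<open>c > 0\<close> \<open>x < y\<close> by simp
  ultimately show "std_normal_cdf x < std_normal_cdf y"
    using cdf_diff_eq[OF \<open>x < y\<close>] by (simp add: std_normal_cdf_eq_cdf)
qed

lemma std_normal_cdf_quantile:
  assumes "0 < p" "p < 1"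
  shows "std_normal_cdf (std_normal_quantile p) = p"
proof -
  interpret real_distribution std_normal_distribution by (rule real_dist_normal_dist)
  have "eventually (\<lambda>x. std_normal_cdf x < p) at_bot"
    using cdf_lim_at_bot assms unfolding std_normal_cdf_eq_cdf by (auto simp: order_tendsto_iff)
  then obtain a where a: "std_normal_cdf a < p" by (auto simp: eventually_at_bot_linorder)
  have "eventually (\<lambda>x. p < std_normal_cdf x) at_top"
    using cdf_lim_at_top_prob assms unfolding std_normal_cdf_eq_cdf by (auto simp: order_tendsto_iff)
  then obtain b where b: "p < std_normal_cdf b" by (auto simp: eventually_at_top_linorder)
  have "a \<le> b"
  proof (rule ccontr)
    assume "\<not> a \<le> b"
    then have "std_normal_cdf b < std_normal_cdf a"
      using strict_monoD[OF strict_mono_std_normal_cdf] by simp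
    with a b show False by simp
  qed
  then have "\<exists>q\<ge>a. q \<le> b \<and> std_normal_cdf q = p"
    using a b by (intro IVT) (auto intro: isCont_std_normal_cdf less_imp_le)
  then obtain q where q: "std_normal_cdf q = p" by blast
  then have "std_normal_quantile p = q"
    unfolding std_normal_quantile_def
    by (rule the_equality) (simp add: q[symmetric] strict_mono_eq[OF strict_mono_std_normal_cdf])
  with q show ?thesis by simp
qed

lemma std_normal_cdf_le_1: "std_normal_cdf x \<le> 1"
  unfolding std_normal_cdf_eq_cdf by (rule real_distribution.cdf_bounded_prob[OF real_dist_normal_dist])

section \<open>Sample means and their characteristic functions\<close>

lemma char_distr:
  assumes "X \<in> borel_measurable M"
  shows "char (distr M borel X) t = (CLINT \<omega>|M. iexp (t * X \<omega>))"
  using assms unfolding char_def by (simp add: integral_distr)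

lemma char_distr_pair_add:
  assumes A: "prob_space A" and B: "prob_space B"
    and F[measurable]: "F \<in> borel_measurable A" and G[measurable]: "G \<in> borel_measurable B"
  shows "char (distr (A \<Otimes>\<^sub>M B) borel (\<lambda>\<omega>. F (fst \<omega>) + G (snd \<omega>))) t
     = char (distr A borel F) t * char (distr B borel G) t"
proof -
  interpret A: prob_space A by (rule A)
  interpret B: prob_space B by (rule B)
  interpret AB: pair_prob_space A B ..
  have "char (distr (A \<Otimes>\<^sub>M B) borel (\<lambda>\<omega>. F (fst \<omega>) + G (snd \<omega>))) t
      = (CLINT \<omega>|A \<Otimes>\<^sub>M B. iexp (t * F (fst \<omega>)) * iexp (t * G (snd \<omega>)))"
    by (simp add: char_distr ring_distribs exp_add)
  also have "\<dots> = (CLINT x|A. (CLINT y|B. iexp (t * F (fst (x, y))) * iexp (t * G (snd (x, y)))))"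
    by (rule AB.integral_fst'[symmetric])
       (intro AB.P.integrable_const_bound[where B=1], auto simp: norm_mult)
  also have "\<dots> = char (distr A borel F) t * char (distr B borel G) t"
    by (simp add: char_distr)
  finally show ?thesis .
qed

lemma char_distr_pair_fst:
  assumes "prob_space A" "prob_space B" "F \<in> borel_measurable A"
  shows "char (distr (A \<Otimes>\<^sub>M B) borel (\<lambda>\<omega>. F (fst \<omega>))) t = char (distr A borel F) t"
  using char_distr_pair_add[OF assms, of "\<lambda>_. 0"] assms(2)
  by (simp add: char_distr prob_space.prob_space)

lemma char_distr_pair_snd:
  assumes "prob_space A" "prob_space B" "G \<in> borel_measurable B"
  shows "char (distr (A \<Otimes>\<^sub>M B) borel (\<lambda>\<omega>. G (snd \<omega>))) t = char (distr B borel G) t"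
  using char_distr_pair_add[OF assms(1,2) _ assms(3), of "\<lambda>_. 0"] assms(1)
  by (simp add: char_distr prob_space.prob_space)

definition sample_mean :: "('a \<Rightarrow> real) \<Rightarrow> nat \<Rightarrow> (nat \<Rightarrow> 'a) \<Rightarrow> real"
  where "sample_mean h k xs = (\<Sum>i<k. h (xs i)) / real k"

lemma measurable_sample_mean:
  assumes [measurable]: "h \<in> borel_measurable M"
  shows "sample_mean h k \<in> borel_measurable (PiM {..<k} (\<lambda>_. M))"
  unfolding sample_mean_def by measurable

lemma AE_sample_mean_eq:
  assumes "prob_space P" and h: "AE x in P. h x = p" and "0 < k"
  shows "AE xs in PiM {..<k} (\<lambda>_. P). sample_mean h k xs = p"
proof -
  have "AE xs in PiM {..<k} (\<lambda>_. P). \<forall>i\<in>{..<k}. h (xs i) = p"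
    using AE_PiM_component[of "{..<k}" "\<lambda>_. P" _ "\<lambda>x. h x = p"] assms(1) h
    by (intro AE_finite_allI) auto
  then show ?thesis
    by eventually_elim (use \<open>0 < k\<close> in \<open>simp add: sample_mean_def\<close>)
qed

lemma AE_pair_measure_conj:
  assumes "prob_space A" "prob_space B"
    and [measurable]: "Measurable.pred A R" "Measurable.pred B S"
    and R: "AE x in A. R x" and S: "AE y in B. S y"
  shows "AE \<omega> in A \<Otimes>\<^sub>M B. R (fst \<omega>) \<and> S (snd \<omega>)"
proof -
  interpret pair_prob_space A B
    using assms(1,2) by (simp add: pair_prob_space_def pair_sigma_finite_def prob_space_imp_sigma_finite)
  from R have "AE x in A. AE y in B. R (fst (x, y)) \<and> S (snd (x, y))"
    by eventually_elim (use S in simp)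
  then show ?thesis
    by (rule AE_pair_measure[rotated]) measurable
qed

lemma char_distr_sample_mean:
  assumes P: "prob_space P" and g[measurable]: "g \<in> borel_measurable P" and "0 < k"
  shows "char (distr (PiM {..<k} (\<lambda>_. P)) borel (\<lambda>x. c * (sample_mean g k x - p))) t
       = char (distr P borel (\<lambda>y. g y - p)) (c * t / k) ^ k"
proof -
  interpret P: prob_space P by (rule P)
  interpret product_sigma_finite "\<lambda>_::nat. P"
    by (simp add: product_sigma_finite_def P.sigma_finite_measure_axioms)
  have sum: "t * (c * ((\<Sum>i<k. g (x i)) / k - p)) = (\<Sum>i<k. c * t / k * (g (x i) - p))" for x
  proof -
    have "(\<Sum>i<k. c * t / k * (g (x i) - p)) = c * t / k * ((\<Sum>i<k. g (x i)) - k * p)"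
      unfolding sum_distrib_left[symmetric] by (simp add: sum_subtractf)
    then show ?thesis using \<open>0 < k\<close> by (simp add: field_simps)
  qed
  have integrable: "integrable P (\<lambda>y. iexp (s * (g y - p)))" for s
    by (rule P.integrable_iexp) auto
  have "char (distr (PiM {..<k} (\<lambda>_. P)) borel (\<lambda>x. c * ((\<Sum>i<k. g (x i)) / k - p))) t
      = (CLINT x|PiM {..<k} (\<lambda>_. P). (\<Prod>i<k. iexp (c * t / k * (g (x i) - p))))"
    by (simp add: char_distr sum exp_sum[symmetric] sum_distrib_left)
  also have "\<dots> = (\<Prod>i<k. CLINT y|P. iexp (c * t / k * (g y - p)))"
    by (intro product_integral_prod finite_lessThan integrable)
  also have "\<dots> = char (distr P borel (\<lambda>y. g y - p)) (c * t / k) ^ k"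
    by (simp add: char_distr)
  finally show ?thesis unfolding sample_mean_def .
qed

lemma (in prob_space) variance_zero_one:
  fixes X :: "'a \<Rightarrow> real"
  assumes [measurable]: "X \<in> borel_measurable M" and X_01: "\<And>x. x \<in> space M \<Longrightarrow> X x \<in> {0, 1}"
  shows "variance X = expectation X * (1 - expectation X)"
proof -
  have "integrable M X"
    by (intro integrable_const_bound[of _ 1] AE_I2) (auto dest: X_01)
  have "variance X = expectation (\<lambda>x. (1 - 2 * expectation X) * X x + (expectation X)\<^sup>2)"
    using X_01 by (intro Bochner_Integration.integral_cong refl) (auto simp: power2_eq_square algebra_simps)
  also have "\<dots> = expectation X * (1 - expectation X)"
    using \<open>integrable M X\<close> by (simp add: prob_space power2_eq_square algebra_simps)
  finally show ?thesis .
qed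

lemma (in prob_space) AE_eq_expectation_of_variance_eq_0:
  fixes X :: "'a \<Rightarrow> real"
  assumes [measurable]: "X \<in> borel_measurable M" and "integrable M (\<lambda>x. (X x)\<^sup>2)" and "variance X = 0"
  shows "AE x in M. X x = expectation X"
proof -
  have "integrable M X"
    by (rule square_integrable_imp_integrable[OF assms(1,2)])
  then have "integrable M (\<lambda>x. (X x)\<^sup>2 + (expectation X)\<^sup>2 - 2 * X x * expectation X)"
    using assms(2) by (intro Bochner_Integration.integrable_add Bochner_Integration.integrable_diff
        integrable_mult_left integrable_mult_right integrable_const)
  then have "integrable M (\<lambda>x. (X x - expectation X)\<^sup>2)"
    by (simp add: power2_diff)
  with \<open>variance X = 0\<close> have "AE x in M. (X x - expectation X)\<^sup>2 = 0"
    by (subst integral_nonneg_eq_0_iff_AE[symmetric]) auto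
  then show ?thesis by eventually_elim simp
qed

lemma norm_power_taylor_approx:
  fixes \<phi> :: "real \<Rightarrow> complex"
  assumes \<phi>_le_1: "\<And>s. norm (\<phi> s) \<le> 1"
    and taylor: "\<And>s. norm (\<phi> s - complex_of_real (1 - s\<^sup>2 * \<sigma>2 / 2)) \<le> \<bar>s\<bar> ^ 3 / 6"
    and "0 \<le> \<sigma>2" and "0 < k" and "\<sigma>2 * c0\<^sup>2 / 2 \<le> k"
  shows "norm (\<phi> (c / sqrt k) ^ k - complex_of_real (1 - \<sigma>2 * c0\<^sup>2 / 2 / k) ^ k)
           \<le> \<bar>c\<bar> ^ 3 / 6 / sqrt k + \<sigma>2 / 2 * \<bar>c\<^sup>2 - c0\<^sup>2\<bar>"
proof -
  define s where "s = c / sqrt k"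
  have k_pos: "0 < real k" using \<open>0 < k\<close> by simp
  have "\<bar>1 - \<sigma>2 * c0\<^sup>2 / 2 / k\<bar> \<le> 1"
    using assms(3,5) k_pos by (auto simp: abs_le_iff field_simps)
  then have "norm (\<phi> s ^ k - complex_of_real (1 - \<sigma>2 * c0\<^sup>2 / 2 / k) ^ k)
      \<le> k * norm (\<phi> s - complex_of_real (1 - \<sigma>2 * c0\<^sup>2 / 2 / k))"
    by (intro norm_power_diff \<phi>_le_1) (simp only: norm_of_real)
  also have "\<dots> \<le> k * (\<bar>s\<bar> ^ 3 / 6 + \<sigma>2 / 2 * \<bar>c\<^sup>2 - c0\<^sup>2\<bar> / k)"
  proof (intro mult_left_mono)
    have "(1 - s\<^sup>2 * \<sigma>2 / 2) - (1 - \<sigma>2 * c0\<^sup>2 / 2 / k) = \<sigma>2 / 2 * (c0\<^sup>2 - c\<^sup>2) / k"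
      using k_pos by (simp add: s_def power_divide field_simps)
    then have "norm (complex_of_real (1 - s\<^sup>2 * \<sigma>2 / 2) - complex_of_real (1 - \<sigma>2 * c0\<^sup>2 / 2 / k))
        = \<sigma>2 / 2 * \<bar>c\<^sup>2 - c0\<^sup>2\<bar> / k"
      using k_pos \<open>0 \<le> \<sigma>2\<close>
      by (simp only: of_real_diff[symmetric] norm_of_real) (simp add: abs_mult abs_minus_commute)
    then show "norm (\<phi> s - complex_of_real (1 - \<sigma>2 * c0\<^sup>2 / 2 / k))
        \<le> \<bar>s\<bar> ^ 3 / 6 + \<sigma>2 / 2 * \<bar>c\<^sup>2 - c0\<^sup>2\<bar> / k"
      by (intro norm_diff_triangle_le[OF taylor]) simp
  qed simp
  also have "\<dots> = \<bar>c\<bar> ^ 3 / 6 / sqrt k + \<sigma>2 / 2 * \<bar>c\<^sup>2 - c0\<^sup>2\<bar>"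
    using k_pos by (simp add: s_def power_divide abs_div power3_eq_cube field_simps)
  finally show ?thesis
    by (simp only: s_def)
qed

lemma tendsto_power_taylor_gaussian:
  fixes \<phi> :: "real \<Rightarrow> complex" and k :: "'b \<Rightarrow> nat" and c :: "'b \<Rightarrow> real"
  assumes \<phi>_le_1: "\<And>s. norm (\<phi> s) \<le> 1"
    and taylor: "\<And>s. norm (\<phi> s - complex_of_real (1 - s\<^sup>2 * \<sigma>2 / 2)) \<le> \<bar>s\<bar> ^ 3 / 6"
    and "0 \<le> \<sigma>2" and k: "filterlim k at_top F" and c: "(c \<longlongrightarrow> c0) F"
  shows "((\<lambda>i. \<phi> (c i / sqrt (k i)) ^ k i) \<longlongrightarrow> complex_of_real (exp (- \<sigma>2 * c0\<^sup>2 / 2))) F"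
proof -
  have "eventually (\<lambda>i. k i \<ge> max 1 (nat \<lceil>\<sigma>2 * c0\<^sup>2 / 2\<rceil>)) F"
    using k unfolding filterlim_at_top by blast
  then have "eventually (\<lambda>i. norm (\<phi> (c i / sqrt (k i)) ^ k i
      - complex_of_real (1 - \<sigma>2 * c0\<^sup>2 / 2 / k i) ^ k i)
      \<le> \<bar>c i\<bar> ^ 3 / 6 / sqrt (k i) + \<sigma>2 / 2 * \<bar>(c i)\<^sup>2 - c0\<^sup>2\<bar>) F"
    by eventually_elim (rule norm_power_taylor_approx[OF \<phi>_le_1 taylor \<open>0 \<le> \<sigma>2\<close>]; linarith)
  moreover have "filterlim (\<lambda>i. sqrt (real (k i))) at_top F"
    by (rule filterlim_compose[OF sqrt_at_top filterlim_compose[OF filterlim_real_sequentially k]])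
  then have "((\<lambda>i. \<bar>c i\<bar> ^ 3 / 6 / sqrt (k i) + \<sigma>2 / 2 * \<bar>(c i)\<^sup>2 - c0\<^sup>2\<bar>) \<longlongrightarrow> 0) F"
    by (intro tendsto_add_zero tendsto_divide_0[OF _ filterlim_at_top_imp_at_infinity])
      (auto intro!: tendsto_eq_intros c)
  ultimately have "((\<lambda>i. \<phi> (c i / sqrt (k i)) ^ k i
      - complex_of_real (1 - \<sigma>2 * c0\<^sup>2 / 2 / k i) ^ k i) \<longlongrightarrow> 0) F"
    by (rule Lim_null_comparison)
  moreover have "((\<lambda>i. (1 - \<sigma>2 * c0\<^sup>2 / 2 / k i) ^ k i) \<longlongrightarrow> exp (- \<sigma>2 * c0\<^sup>2 / 2)) F"
    using filterlim_compose[OF tendsto_exp_limit_sequentially[of "- \<sigma>2 * c0\<^sup>2 / 2"] k] by simp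
  then have "((\<lambda>i. complex_of_real (1 - \<sigma>2 * c0\<^sup>2 / 2 / k i) ^ k i)
      \<longlongrightarrow> complex_of_real (exp (- \<sigma>2 * c0\<^sup>2 / 2))) F"
    unfolding of_real_power[symmetric] by (rule tendsto_of_real)
  ultimately show ?thesis
    by (rule Lim_transform[rotated])
qed

lemma (in prob_space) char_taylor_bound:
  fixes X :: "'a \<Rightarrow> real"
  assumes [measurable]: "X \<in> borel_measurable M" and bounded: "AE x in M. \<bar>X x\<bar> \<le> 1"
    and mean: "expectation X = 0" and second_moment: "expectation (\<lambda>x. (X x)\<^sup>2) = \<sigma>2"
  shows "norm (char (distr M borel X) s - complex_of_real (1 - s\<^sup>2 * \<sigma>2 / 2)) \<le> \<bar>s\<bar> ^ 3 / 6"
proof -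
  have integrable: "integrable M X" "integrable M (\<lambda>x. (X x)\<^sup>2)" "integrable M (\<lambda>x. \<bar>X x\<bar> ^ 3)"
    using bounded by (auto intro!: integrable_const_bound[of _ 1] simp: abs_square_le_1 power_le_one)
  have "AE x in M. \<bar>X x\<bar> ^ 3 \<le> 1"
    using bounded by eventually_elim (simp add: power_le_one)
  then have third_moment: "expectation (\<lambda>x. \<bar>X x\<bar> ^ 3) \<le> 1"
    using integral_mono_AE[OF integrable(3) integrable_const, of 1] prob_space by simp
  have "norm (char (distr M borel X) s - complex_of_real (1 - s\<^sup>2 * \<sigma>2 / 2))
      \<le> s\<^sup>2 / 6 * expectation (\<lambda>x. min (6 * (X x)\<^sup>2) (\<bar>s\<bar> * \<bar>X x\<bar> ^ 3))"
    using integrable mean second_moment by (intro char_approx3') auto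
  also have "\<dots> \<le> s\<^sup>2 / 6 * expectation (\<lambda>x. \<bar>s\<bar> * \<bar>X x\<bar> ^ 3)"
    using integrable by (intro mult_left_mono integral_mono) auto
  also have "\<dots> \<le> s\<^sup>2 / 6 * \<bar>s\<bar>"
    using third_moment by (intro mult_left_mono) (auto simp: mult_left_le)
  finally show ?thesis by (simp add: power2_eq_square power3_eq_cube abs_mult)
qed

lemma (in prob_space) char_power_tendsto_gaussian:
  fixes X :: "'a \<Rightarrow> real" and k :: "'b \<Rightarrow> nat" and c :: "'b \<Rightarrow> real"
  assumes [measurable]: "X \<in> borel_measurable M" and "AE x in M. \<bar>X x\<bar> \<le> 1"
    and "expectation X = 0" and second_moment: "expectation (\<lambda>x. (X x)\<^sup>2) = \<sigma>2"
    and k: "filterlim k at_top F" and c: "(c \<longlongrightarrow> c0) F"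
  shows "((\<lambda>i. char (distr M borel X) (c i / sqrt (k i)) ^ k i)
           \<longlongrightarrow> complex_of_real (exp (- \<sigma>2 * c0\<^sup>2 / 2))) F"
proof (rule tendsto_power_taylor_gaussian[OF _ char_taylor_bound[OF assms(1-4)] _ k c])
  interpret \<mu>: real_distribution "distr M borel X" by (rule real_distribution_distr) simp
  show "norm (char (distr M borel X) s) \<le> 1" for s
    by (rule \<mu>.cmod_char_le_1)
  show "0 \<le> \<sigma>2"
    unfolding second_moment[symmetric] by (rule integral_nonneg_AE) simp
qed

lemma (in prob_space) char_sample_mean_tendsto_gaussian:
  fixes h :: "'a \<Rightarrow> real" and k :: "'b \<Rightarrow> nat" and c :: "'b \<Rightarrow> real"
  assumes [measurable]: "h \<in> borel_measurable M" and h_01: "\<And>x. x \<in> space M \<Longrightarrow> 0 \<le> h x \<and> h x \<le> 1"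
    and k: "filterlim k at_top F" and c: "((\<lambda>i. c i / sqrt (k i)) \<longlongrightarrow> c0) F"
  shows "((\<lambda>i. char (distr (PiM {..<k i} (\<lambda>_. M)) borel
              (\<lambda>x. c i * (sample_mean h (k i) x - expectation h))) t)
           \<longlongrightarrow> complex_of_real (exp (- variance h * (c0 * t)\<^sup>2 / 2))) F"
proof -
  have "integrable M h"
    using h_01 by (intro integrable_const_bound[of _ 1]) auto
  have "0 \<le> expectation h" "expectation h \<le> 1"
    using h_01 integral_mono[OF \<open>integrable M h\<close> integrable_const, of 1] prob_space
    by (auto intro!: integral_nonneg_AE)
  then have "\<bar>h x - expectation h\<bar> \<le> 1" if "x \<in> space M" for x
    using h_01[OF that] by (simp add: abs_le_iff)
  then have "AE x in M. \<bar>h x - expectation h\<bar> \<le> 1"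
    by (rule AE_I2)
  moreover have "expectation (\<lambda>x. h x - expectation h) = 0"
    using \<open>integrable M h\<close> by (simp add: prob_space)
  ultimately have "((\<lambda>i. char (distr M borel (\<lambda>x. h x - expectation h)) (c i / sqrt (k i) * t / sqrt (k i)) ^ k i)
      \<longlongrightarrow> complex_of_real (exp (- variance h * (c0 * t)\<^sup>2 / 2))) F"
    by (intro char_power_tendsto_gaussian[OF _ _ _ refl k tendsto_mult_right[OF c]]) auto
  moreover have "eventually (\<lambda>i. 0 < k i) F"
    by (rule filterlim_iff[THEN iffD1, OF k, rule_format]) (rule eventually_gt_at_top)
  then have "eventually (\<lambda>i. char (distr M borel (\<lambda>x. h x - expectation h)) (c i / sqrt (k i) * t / sqrt (k i)) ^ k i
      = char (distr (PiM {..<k i} (\<lambda>_. M)) borel (\<lambda>x. c i * (sample_mean h (k i) x - expectation h))) t) F"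
  proof eventually_elim
    case (elim i)
    then show ?case
      by (simp add: char_distr_sample_mean prob_space_axioms real_sqrt_mult_self)
  qed
  ultimately show ?thesis
    by (rule Lim_transform_eventually)
qed

section \<open>Convergence in probability and a Slutsky bound\<close>

definition converges_in_prob :: "(nat \<Rightarrow> 'b measure) \<Rightarrow> (nat \<Rightarrow> 'b \<Rightarrow> 'c::metric_space) \<Rightarrow> 'c \<Rightarrow> bool"
  where "converges_in_prob \<Omega> X c \<longleftrightarrow>
    (\<forall>\<eta>>0. (\<lambda>N. measure (\<Omega> N) {\<omega> \<in> space (\<Omega> N). \<eta> < dist (X N \<omega>) c}) \<longlonglongrightarrow> 0)"

lemma converges_in_prob_const:
  assumes "u \<longlonglongrightarrow> c"
  shows "converges_in_prob \<Omega> (\<lambda>N _. u N) c"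
  unfolding converges_in_prob_def
proof (intro allI impI tendsto_eventually)
  fix \<eta> :: real assume "0 < \<eta>"
  with assms have "eventually (\<lambda>N. dist (u N) c < \<eta>) sequentially"
    by (rule tendstoD)
  then show "eventually (\<lambda>N. measure (\<Omega> N) {\<omega> \<in> space (\<Omega> N). \<eta> < dist (u N) c} = 0) sequentially"
    by eventually_elim simp
qed

lemma converges_in_prob_Pair:
  fixes X :: "nat \<Rightarrow> 'b \<Rightarrow> 'c::{metric_space, second_countable_topology}"
    and Y :: "nat \<Rightarrow> 'b \<Rightarrow> 'd::{metric_space, second_countable_topology}"
  assumes prob: "\<And>N. prob_space (\<Omega> N)"
    and [measurable]: "\<And>N. X N \<in> borel_measurable (\<Omega> N)" "\<And>N. Y N \<in> borel_measurable (\<Omega> N)"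
    and X: "converges_in_prob \<Omega> X a" and Y: "converges_in_prob \<Omega> Y b"
  shows "converges_in_prob \<Omega> (\<lambda>N \<omega>. (X N \<omega>, Y N \<omega>)) (a, b)"
  unfolding converges_in_prob_def
proof (intro allI impI)
  fix \<eta> :: real assume "0 < \<eta>"
  let ?E = "\<lambda>N Z c. {\<omega> \<in> space (\<Omega> N). \<eta> / 2 < dist (Z N \<omega>) c}"
  have le: "measure (\<Omega> N) {\<omega> \<in> space (\<Omega> N). \<eta> < dist (X N \<omega>, Y N \<omega>) (a, b)}
      \<le> measure (\<Omega> N) (?E N X a) + measure (\<Omega> N) (?E N Y b)" for N
  proof -
    interpret prob_space "\<Omega> N" by (rule prob)
    have dist_le: "dist (x, y) (a, b) \<le> dist x a + dist y b" for x y
      unfolding dist_Pair_Pair by (intro sqrt_sum_squares_le_sum) auto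
    have "\<eta> / 2 < dist x a \<or> \<eta> / 2 < dist y b" if "\<eta> < dist (x, y) (a, b)" for x y
      using that dist_le[of x y] by linarith
    then have "{\<omega> \<in> space (\<Omega> N). \<eta> < dist (X N \<omega>, Y N \<omega>) (a, b)} \<subseteq> ?E N X a \<union> ?E N Y b"
      by blast
    then have "measure (\<Omega> N) {\<omega> \<in> space (\<Omega> N). \<eta> < dist (X N \<omega>, Y N \<omega>) (a, b)}
        \<le> measure (\<Omega> N) (?E N X a \<union> ?E N Y b)"
      by (intro finite_measure_mono) measurable
    also have "\<dots> \<le> measure (\<Omega> N) (?E N X a) + measure (\<Omega> N) (?E N Y b)"
      by (intro measure_Un_le) measurable
    finally show ?thesis .
  qed
  have bound: "(\<lambda>N. measure (\<Omega> N) (?E N X a) + measure (\<Omega> N) (?E N Y b)) \<longlonglongrightarrow> 0"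
  proof (rule tendsto_add_zero)
    show "(\<lambda>N. measure (\<Omega> N) (?E N X a)) \<longlonglongrightarrow> 0" "(\<lambda>N. measure (\<Omega> N) (?E N Y b)) \<longlonglongrightarrow> 0"
      using X Y \<open>0 < \<eta>\<close> unfolding converges_in_prob_def by (auto dest!: spec[of _ "\<eta> / 2"])
  qed
  show "(\<lambda>N. measure (\<Omega> N) {\<omega> \<in> space (\<Omega> N). \<eta> < dist (X N \<omega>, Y N \<omega>) (a, b)}) \<longlonglongrightarrow> 0"
    by (rule Lim_null_comparison[OF always_eventually bound]) (rule allI, rule order_trans[OF _ le], simp)
qed

lemma converges_in_prob_compose:
  fixes X :: "nat \<Rightarrow> 'b \<Rightarrow> 'c::{metric_space, second_countable_topology}"
    and g :: "'c \<Rightarrow> 'd::metric_space"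
  assumes prob: "\<And>N. prob_space (\<Omega> N)" and [measurable]: "\<And>N. X N \<in> borel_measurable (\<Omega> N)"
    and X: "converges_in_prob \<Omega> X a" and g: "isCont g a"
  shows "converges_in_prob \<Omega> (\<lambda>N \<omega>. g (X N \<omega>)) (g a)"
  unfolding converges_in_prob_def
proof (intro allI impI)
  fix \<eta> :: real assume "0 < \<eta>"
  with g obtain \<delta> where "0 < \<delta>" and \<delta>: "\<And>x. dist x a < \<delta> \<Longrightarrow> dist (g x) (g a) < \<eta>"
    unfolding continuous_at_eps_delta by blast
  have le: "measure (\<Omega> N) {\<omega> \<in> space (\<Omega> N). \<eta> < dist (g (X N \<omega>)) (g a)}
      \<le> measure (\<Omega> N) {\<omega> \<in> space (\<Omega> N). \<delta> / 2 < dist (X N \<omega>) a}" for N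
  proof -
    interpret prob_space "\<Omega> N" by (rule prob)
    have "\<delta> / 2 < dist x a" if "\<eta> < dist (g x) (g a)" for x
    proof -
      have "\<not> dist x a < \<delta>" using \<delta>[of x] that by auto
      with \<open>0 < \<delta>\<close> show ?thesis by linarith
    qed
    then have "{\<omega> \<in> space (\<Omega> N). \<eta> < dist (g (X N \<omega>)) (g a)}
        \<subseteq> {\<omega> \<in> space (\<Omega> N). \<delta> / 2 < dist (X N \<omega>) a}" by auto
    then show ?thesis by (rule finite_measure_mono) measurable
  qed
  have bound: "(\<lambda>N. measure (\<Omega> N) {\<omega> \<in> space (\<Omega> N). \<delta> / 2 < dist (X N \<omega>) a}) \<longlonglongrightarrow> 0"
    using X \<open>0 < \<delta>\<close> unfolding converges_in_prob_def by (auto dest!: spec[of _ "\<delta> / 2"])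
  show "(\<lambda>N. measure (\<Omega> N) {\<omega> \<in> space (\<Omega> N). \<eta> < dist (g (X N \<omega>)) (g a)}) \<longlonglongrightarrow> 0"
    by (rule Lim_null_comparison[OF always_eventually bound]) (rule allI, rule order_trans[OF _ le], simp)
qed

lemma (in prob_space) prob_dist_gt_le:
  fixes X :: "'a \<Rightarrow> real"
  assumes [measurable]: "X \<in> borel_measurable M"
  shows "prob {x \<in> space M. \<eta> < dist (X x) c}
    \<le> prob {x \<in> space M. X x - c \<le> - \<eta>} + (1 - prob {x \<in> space M. X x - c \<le> \<eta>})"
proof -
  have "{x \<in> space M. \<eta> < dist (X x) c}
      \<subseteq> {x \<in> space M. X x - c \<le> - \<eta>} \<union> (space M - {x \<in> space M. X x - c \<le> \<eta>})"
    by (auto simp: dist_real_def)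
  then have "prob {x \<in> space M. \<eta> < dist (X x) c}
      \<le> prob ({x \<in> space M. X x - c \<le> - \<eta>} \<union> (space M - {x \<in> space M. X x - c \<le> \<eta>}))"
    by (rule finite_measure_mono) measurable
  also have "\<dots> \<le> prob {x \<in> space M. X x - c \<le> - \<eta>} + prob (space M - {x \<in> space M. X x - c \<le> \<eta>})"
    by (rule measure_Un_le) measurable
  also have "prob (space M - {x \<in> space M. X x - c \<le> \<eta>}) = 1 - prob {x \<in> space M. X x - c \<le> \<eta>}"
    by (rule prob_compl) measurable
  finally show ?thesis .
qed

lemma cdf_distr:
  assumes "X \<in> borel_measurable M"
  shows "cdf (distr M borel X) x = measure M {\<omega> \<in> space M. X \<omega> \<le> x}"
  using assms unfolding cdf_def by (subst measure_distr) (auto simp: vimage_def Int_def conj_commute)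

lemma converges_in_prob_of_char:
  fixes X :: "nat \<Rightarrow> 'b \<Rightarrow> real"
  assumes prob: "\<And>N. prob_space (\<Omega> N)" and [measurable]: "\<And>N. X N \<in> borel_measurable (\<Omega> N)"
    and char: "\<And>t. (\<lambda>N. char (distr (\<Omega> N) borel (\<lambda>\<omega>. X N \<omega> - c)) t) \<longlonglongrightarrow> 1"
  shows "converges_in_prob \<Omega> X c"
  unfolding converges_in_prob_def
proof (intro allI impI)
  fix \<eta> :: real assume "0 < \<eta>"
  let ?\<mu> = "\<lambda>N. distr (\<Omega> N) borel (\<lambda>\<omega>. X N \<omega> - c)"
  define \<delta> :: "real measure" where "\<delta> = return borel 0"
  have real_dist_\<delta>: "real_distribution \<delta>"
    by (simp add: \<delta>_def real_distribution_def real_distribution_axioms_def prob_space_return)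
  interpret \<delta>: real_distribution \<delta> by (rule real_dist_\<delta>)
  have "weak_conv_m ?\<mu> \<delta>"
    using char by (intro levy_continuity prob_space.real_distribution_distr prob real_dist_\<delta>)
      (auto simp: \<delta>_def char_def integral_return)
  moreover have "isCont (cdf \<delta>) x" if "x \<noteq> 0" for x
    unfolding \<delta>.isCont_cdf using that by (simp add: \<delta>_def measure_return)
  ultimately have cdf_conv: "(\<lambda>N. cdf (?\<mu> N) x) \<longlonglongrightarrow> cdf \<delta> x" if "x \<noteq> 0" for x
    using that unfolding weak_conv_m_def weak_conv_def by blast
  have cdf_\<mu>: "cdf (?\<mu> N) x = measure (\<Omega> N) {\<omega> \<in> space (\<Omega> N). X N \<omega> - c \<le> x}" for N x
    by (rule cdf_distr) measurable
  have cdf_\<delta>: "cdf \<delta> x = (if 0 \<le> x then 1 else 0)" for x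
    by (simp add: \<delta>_def cdf_def measure_return)
  have lower: "(\<lambda>N. measure (\<Omega> N) {\<omega> \<in> space (\<Omega> N). X N \<omega> - c \<le> - \<eta>}) \<longlonglongrightarrow> 0"
    using cdf_conv[of "- \<eta>"] \<open>0 < \<eta>\<close> by (simp add: cdf_\<mu> cdf_\<delta>)
  have upper: "(\<lambda>N. measure (\<Omega> N) {\<omega> \<in> space (\<Omega> N). X N \<omega> - c \<le> \<eta>}) \<longlonglongrightarrow> 1"
    using cdf_conv[of \<eta>] \<open>0 < \<eta>\<close> by (simp add: cdf_\<mu> cdf_\<delta>)
  have le: "measure (\<Omega> N) {\<omega> \<in> space (\<Omega> N). \<eta> < dist (X N \<omega>) c}
      \<le> measure (\<Omega> N) {\<omega> \<in> space (\<Omega> N). X N \<omega> - c \<le> - \<eta>}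
        + (1 - measure (\<Omega> N) {\<omega> \<in> space (\<Omega> N). X N \<omega> - c \<le> \<eta>})" for N
    by (rule prob_space.prob_dist_gt_le[OF prob]) measurable
  have bound: "(\<lambda>N. measure (\<Omega> N) {\<omega> \<in> space (\<Omega> N). X N \<omega> - c \<le> - \<eta>}
        + (1 - measure (\<Omega> N) {\<omega> \<in> space (\<Omega> N). X N \<omega> - c \<le> \<eta>})) \<longlonglongrightarrow> 0"
    using tendsto_add[OF lower tendsto_diff[OF tendsto_const[of 1] upper]] by simp
  show "(\<lambda>N. measure (\<Omega> N) {\<omega> \<in> space (\<Omega> N). \<eta> < dist (X N \<omega>) c}) \<longlonglongrightarrow> 0"
    by (rule Lim_null_comparison[OF always_eventually bound]) (rule allI, rule order_trans[OF _ le], simp)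
qed

lemma cdf_tendsto_of_char_gaussian:
  fixes T :: "nat \<Rightarrow> 'b \<Rightarrow> real"
  assumes prob: "\<And>N. prob_space (\<Omega> N)" and [measurable]: "\<And>N. T N \<in> borel_measurable (\<Omega> N)"
    and char: "\<And>t. (\<lambda>N. char (distr (\<Omega> N) borel (T N)) t) \<longlonglongrightarrow> complex_of_real (exp (- (\<tau> * t)\<^sup>2 / 2))"
    and "0 < \<tau>"
  shows "(\<lambda>N. measure (\<Omega> N) {\<omega> \<in> space (\<Omega> N). T N \<omega> \<le> x}) \<longlonglongrightarrow> std_normal_cdf (x / \<tau>)"
proof -
  interpret std: real_distribution std_normal_distribution by (rule real_dist_normal_dist)
  define \<nu> where "\<nu> = distr std_normal_distribution borel (\<lambda>z. \<tau> * z)"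
  interpret \<nu>: real_distribution \<nu> unfolding \<nu>_def by (rule std.real_distribution_distr) simp
  have cdf_\<nu>: "cdf \<nu> = (\<lambda>y. std_normal_cdf (y / \<tau>))"
  proof
    fix y
    have "{z. \<tau> * z \<le> y} = {..y / \<tau>}" using \<open>0 < \<tau>\<close> by (auto simp: field_simps)
    then show "cdf \<nu> y = std_normal_cdf (y / \<tau>)"
      by (simp add: \<nu>_def cdf_distr std_normal_cdf_def)
  qed
  have "weak_conv_m (\<lambda>N. distr (\<Omega> N) borel (T N)) \<nu>"
  proof (intro levy_continuity prob_space.real_distribution_distr prob \<nu>.real_distribution_axioms)
    have "char \<nu> t = char std_normal_distribution (\<tau> * t)" for t
      unfolding \<nu>_def char_def by (subst integral_distr) (auto simp: ac_simps)
    then show "(\<lambda>N. char (distr (\<Omega> N) borel (T N)) t) \<longlonglongrightarrow> char \<nu> t" for t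
      using char[of t] by (simp add: char_std_normal_distribution)
  qed simp
  moreover have "isCont (cdf \<nu>) x"
    unfolding cdf_\<nu> using \<open>0 < \<tau>\<close> by (intro continuous_intros isCont_o2[OF _ isCont_std_normal_cdf]) auto
  ultimately show ?thesis
    unfolding weak_conv_m_def weak_conv_def by (auto simp: cdf_distr cdf_\<nu>)
qed

lemma (in prob_space) prob_gt_scaled_le:
  fixes T S :: "'a \<Rightarrow> real"
  assumes [measurable]: "T \<in> borel_measurable M" "S \<in> borel_measurable M"
    and "\<bar>q\<bar> * \<epsilon> < q * \<tau> - x"
  shows "prob {\<omega> \<in> space M. q * S \<omega> < T \<omega>}
    \<le> (1 - prob {\<omega> \<in> space M. T \<omega> \<le> x}) + prob {\<omega> \<in> space M. \<epsilon> < dist (S \<omega>) \<tau>}"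
proof -
  have "x < q * s" if "\<not> \<epsilon> < dist s \<tau>" for s
  proof -
    have "\<bar>s - \<tau>\<bar> \<le> \<epsilon>" using that by (simp add: dist_real_def)
    then have "\<bar>q * s - q * \<tau>\<bar> \<le> \<bar>q\<bar> * \<epsilon>"
      by (simp add: right_diff_distrib[symmetric] abs_mult mult_left_mono)
    with assms(3) show ?thesis by linarith
  qed
  then have "{\<omega> \<in> space M. q * S \<omega> < T \<omega>}
      \<subseteq> (space M - {\<omega> \<in> space M. T \<omega> \<le> x}) \<union> {\<omega> \<in> space M. \<epsilon> < dist (S \<omega>) \<tau>}"
    by (force simp: not_le)
  then have "prob {\<omega> \<in> space M. q * S \<omega> < T \<omega>}
      \<le> prob ((space M - {\<omega> \<in> space M. T \<omega> \<le> x}) \<union> {\<omega> \<in> space M. \<epsilon> < dist (S \<omega>) \<tau>})"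
    by (rule finite_measure_mono) measurable
  also have "\<dots> \<le> prob (space M - {\<omega> \<in> space M. T \<omega> \<le> x}) + prob {\<omega> \<in> space M. \<epsilon> < dist (S \<omega>) \<tau>}"
    by (rule measure_Un_le) measurable
  also have "prob (space M - {\<omega> \<in> space M. T \<omega> \<le> x}) = 1 - prob {\<omega> \<in> space M. T \<omega> \<le> x}"
    by (rule prob_compl) measurable
  finally show ?thesis .
qed

lemma limsup_prob_gt_scaled_le:
  fixes T S :: "nat \<Rightarrow> 'b \<Rightarrow> real"
  assumes prob: "\<And>N. prob_space (\<Omega> N)"
    and [measurable]: "\<And>N. T N \<in> borel_measurable (\<Omega> N)" "\<And>N. S N \<in> borel_measurable (\<Omega> N)"
    and T: "\<And>x. (\<lambda>N. measure (\<Omega> N) {\<omega> \<in> space (\<Omega> N). T N \<omega> \<le> x}) \<longlonglongrightarrow> std_normal_cdf (x / \<tau>)"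
    and "0 < \<tau>" and S: "converges_in_prob \<Omega> S \<tau>"
  shows "limsup (\<lambda>N. ereal (measure (\<Omega> N) {\<omega> \<in> space (\<Omega> N). q * S N \<omega> < T N \<omega>}))
           \<le> ereal (1 - std_normal_cdf q)"
proof -
  have limsup_le: "limsup (\<lambda>N. ereal (measure (\<Omega> N) {\<omega> \<in> space (\<Omega> N). q * S N \<omega> < T N \<omega>}))
      \<le> ereal (1 - std_normal_cdf (q - \<delta>))" if "0 < \<delta>" for \<delta>
  proof -
    define \<epsilon> where "\<epsilon> = \<delta> * \<tau> / (\<bar>q\<bar> + 1)"
    have "0 < \<epsilon>" using \<open>0 < \<delta>\<close> \<open>0 < \<tau>\<close> by (simp add: \<epsilon>_def)
    have margin: "\<bar>q\<bar> * \<epsilon> < q * \<tau> - (q * \<tau> - \<delta> * \<tau>)"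
      using \<open>0 < \<delta>\<close> \<open>0 < \<tau>\<close> by (simp add: \<epsilon>_def field_simps)
    let ?A = "\<lambda>N. {\<omega> \<in> space (\<Omega> N). T N \<omega> \<le> q * \<tau> - \<delta> * \<tau>}"
    let ?B = "\<lambda>N. {\<omega> \<in> space (\<Omega> N). \<epsilon> < dist (S N \<omega>) \<tau>}"
    have le: "measure (\<Omega> N) {\<omega> \<in> space (\<Omega> N). q * S N \<omega> < T N \<omega>}
        \<le> (1 - measure (\<Omega> N) (?A N)) + measure (\<Omega> N) (?B N)" for N
      by (rule prob_space.prob_gt_scaled_le[OF prob _ _ margin]; measurable)
    have "(q * \<tau> - \<delta> * \<tau>) / \<tau> = q - \<delta>" using \<open>0 < \<tau>\<close> by (simp add: field_simps)
    then have "(\<lambda>N. (1 - measure (\<Omega> N) (?A N)) + measure (\<Omega> N) (?B N))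
        \<longlonglongrightarrow> (1 - std_normal_cdf (q - \<delta>)) + 0"
      using T[of "q * \<tau> - \<delta> * \<tau>"] S \<open>0 < \<epsilon>\<close> unfolding converges_in_prob_def
      by (intro tendsto_add tendsto_diff tendsto_const) auto
    then have "limsup (\<lambda>N. ereal ((1 - measure (\<Omega> N) (?A N)) + measure (\<Omega> N) (?B N)))
        = ereal (1 - std_normal_cdf (q - \<delta>))"
      by (intro lim_imp_Limsup) (auto intro: tendsto_ereal)
    moreover have "limsup (\<lambda>N. ereal (measure (\<Omega> N) {\<omega> \<in> space (\<Omega> N). q * S N \<omega> < T N \<omega>}))
        \<le> limsup (\<lambda>N. ereal ((1 - measure (\<Omega> N) (?A N)) + measure (\<Omega> N) (?B N)))"
      using le by (intro Limsup_mono always_eventually) simp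
    ultimately show ?thesis by simp
  qed
  have "((\<lambda>\<delta>. ereal (1 - std_normal_cdf (q - \<delta>))) \<longlongrightarrow> ereal (1 - std_normal_cdf q)) (at_right 0)"
    by (intro tendsto_ereal tendsto_diff tendsto_const isCont_tendsto_compose[OF isCont_std_normal_cdf])
      (auto intro!: tendsto_eq_intros)
  moreover have "eventually (\<lambda>\<delta>. limsup (\<lambda>N. ereal (measure (\<Omega> N) {\<omega> \<in> space (\<Omega> N). q * S N \<omega> < T N \<omega>}))
      \<le> ereal (1 - std_normal_cdf (q - \<delta>))) (at_right 0)"
    using eventually_at_right_less[of "0::real"] by eventually_elim (rule limsup_le)
  ultimately show ?thesis
    by (rule tendsto_lowerbound) simp
qed

section \<open>Two independent Bernoulli samples\<close>

lemma tendsto_ratio_complement: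
  fixes m n :: "nat \<Rightarrow> nat"
  assumes "eventually (\<lambda>N. m N + n N = N) sequentially" and "(\<lambda>N. real (m N) / real N) \<longlonglongrightarrow> \<pi>"
  shows "(\<lambda>N. real (n N) / real N) \<longlonglongrightarrow> 1 - \<pi>"
proof (rule Lim_transform_eventually[OF tendsto_diff[OF tendsto_const assms(2)]])
  show "eventually (\<lambda>N. 1 - real (m N) / real N = real (n N) / real N) sequentially"
    using assms(1) eventually_gt_at_top[of 0]
    by eventually_elim (auto simp: field_simps simp flip: of_nat_add)
qed

lemma filterlim_at_top_of_ratio:
  fixes k :: "nat \<Rightarrow> nat"
  assumes "(\<lambda>N. real (k N) / real N) \<longlonglongrightarrow> c" and "0 < c"
  shows "filterlim k at_top sequentially"
proof -
  have "filterlim (\<lambda>N. real (k N) / real N * real N) at_top sequentially"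
    by (rule filterlim_tendsto_pos_mult_at_top[OF assms filterlim_real_sequentially])
  moreover have "eventually (\<lambda>N. real (k N) / real N * real N = real (k N)) sequentially"
    using eventually_gt_at_top[of 0] by eventually_elim simp
  ultimately have "filterlim (\<lambda>N. real (k N)) at_top sequentially"
    by (rule filterlim_cong[OF refl refl, THEN iffD1, rotated])
  then show ?thesis
    by (simp add: filterlim_sequentially_iff_filterlim_real)
qed

locale two_sample_bernoulli =
  fixes P Q :: "'a measure" and h0 h1 :: "'a \<Rightarrow> real" and m n :: "nat \<Rightarrow> nat" and \<pi>0 \<pi>1 :: real
  assumes prob_P: "prob_space P" and prob_Q: "prob_space Q"
    and h0_measurable[measurable]: "h0 \<in> borel_measurable P"
    and h1_measurable[measurable]: "h1 \<in> borel_measurable Q"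
    and h0_01: "\<And>x. h0 x \<in> {0, 1}" and h1_01: "\<And>x. h1 x \<in> {0, 1}"
    and m_ratio: "(\<lambda>N. real (m N) / real N) \<longlonglongrightarrow> \<pi>0" and \<pi>0_pos: "0 < \<pi>0"
    and n_ratio: "(\<lambda>N. real (n N) / real N) \<longlonglongrightarrow> \<pi>1" and \<pi>1_pos: "0 < \<pi>1"
begin

abbreviation \<Omega> :: "nat \<Rightarrow> ((nat \<Rightarrow> 'a) \<times> (nat \<Rightarrow> 'a)) measure"
  where "\<Omega> N \<equiv> sample_space P Q (m N) (n N)"

definition p0 :: real where "p0 = integral\<^sup>L P h0"
definition p1 :: real where "p1 = integral\<^sup>L Q h1"

definition mean0 :: "nat \<Rightarrow> (nat \<Rightarrow> 'a) \<times> (nat \<Rightarrow> 'a) \<Rightarrow> real"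
  where "mean0 N \<omega> = sample_mean h0 (m N) (fst \<omega>)"
definition mean1 :: "nat \<Rightarrow> (nat \<Rightarrow> 'a) \<times> (nat \<Rightarrow> 'a) \<Rightarrow> real"
  where "mean1 N \<omega> = sample_mean h1 (n N) (snd \<omega>)"

(*
  When h0 and h1 are the summands of A0_hat and A1_hat, stat N is sqrt N times the centred
  statistic A0_hat + A1_hat - 1 - (p0 + p1 - 1) and sd_hat N is sqrt N times sigma_hat.
*)
definition stat :: "nat \<Rightarrow> (nat \<Rightarrow> 'a) \<times> (nat \<Rightarrow> 'a) \<Rightarrow> real"
  where "stat N \<omega> = sqrt (real N) * (mean0 N \<omega> - p0) + sqrt (real N) * (mean1 N \<omega> - p1)"

definition sd_hat :: "nat \<Rightarrow> (nat \<Rightarrow> 'a) \<times> (nat \<Rightarrow> 'a) \<Rightarrow> real"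
  where "sd_hat N \<omega> = sqrt (real N / real (m N) * (mean0 N \<omega> * (1 - mean0 N \<omega>))
                            + real N / real (n N) * (mean1 N \<omega> * (1 - mean1 N \<omega>)))"

definition \<tau> :: real where "\<tau> = sqrt (p0 * (1 - p0) / \<pi>0 + p1 * (1 - p1) / \<pi>1)"

lemma h_bounds: "0 \<le> h0 x" "h0 x \<le> 1" "0 \<le> h1 x" "h1 x \<le> 1"
  using h0_01[of x] h1_01[of x] by auto

lemma prob_space_\<Omega>: "prob_space (\<Omega> N)"
  unfolding sample_space_def by (intro prob_space_pair prob_space_PiM prob_P prob_Q)

lemma measurable_sample_means[measurable]:
  "sample_mean h0 k \<in> borel_measurable (PiM {..<k} (\<lambda>_. P))"
  "sample_mean h1 k \<in> borel_measurable (PiM {..<k} (\<lambda>_. Q))"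
  by (simp_all add: measurable_sample_mean)

lemma measurable_statistics[measurable]:
  "mean0 N \<in> borel_measurable (\<Omega> N)" "mean1 N \<in> borel_measurable (\<Omega> N)"
  "stat N \<in> borel_measurable (\<Omega> N)" "sd_hat N \<in> borel_measurable (\<Omega> N)"
  unfolding stat_def sd_hat_def mean0_def mean1_def sample_space_def by measurable

lemma variance_h0: "prob_space.variance P h0 = p0 * (1 - p0)"
  unfolding p0_def using h0_01 by (intro prob_space.variance_zero_one prob_P) auto

lemma variance_h1: "prob_space.variance Q h1 = p1 * (1 - p1)"
  unfolding p1_def using h1_01 by (intro prob_space.variance_zero_one prob_Q) auto

lemma variances_nonneg: "0 \<le> p0 * (1 - p0)" "0 \<le> p1 * (1 - p1)"
  using prob_space.variance_positive[OF prob_P, of h0] prob_space.variance_positive[OF prob_Q, of h1]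
  by (simp_all only: variance_h0 variance_h1)

lemma m_at_top: "filterlim m at_top sequentially"
  by (rule filterlim_at_top_of_ratio[OF m_ratio \<pi>0_pos])

lemma n_at_top: "filterlim n at_top sequentially"
  by (rule filterlim_at_top_of_ratio[OF n_ratio \<pi>1_pos])

lemma N_over_m: "(\<lambda>N. real N / real (m N)) \<longlonglongrightarrow> 1 / \<pi>0"
  using tendsto_inverse[OF m_ratio] \<pi>0_pos by (simp add: inverse_eq_divide)

lemma N_over_n: "(\<lambda>N. real N / real (n N)) \<longlonglongrightarrow> 1 / \<pi>1"
  using tendsto_inverse[OF n_ratio] \<pi>1_pos by (simp add: inverse_eq_divide)

lemma eventually_sizes_pos: "eventually (\<lambda>N. 0 < m N \<and> 0 < n N) sequentially"
  using filterlim_iff[THEN iffD1, OF m_at_top, rule_format, OF eventually_gt_at_top[of 0]]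
    filterlim_iff[THEN iffD1, OF n_at_top, rule_format, OF eventually_gt_at_top[of 0]]
  by eventually_elim simp

lemma char_stat_tendsto:
  "(\<lambda>N. char (distr (\<Omega> N) borel (stat N)) t) \<longlonglongrightarrow> complex_of_real (exp (- (\<tau> * t)\<^sup>2 / 2))"
proof -
  let ?\<phi>0 = "\<lambda>N. char (distr (PiM {..<m N} (\<lambda>_. P)) borel
                    (\<lambda>x. sqrt (real N) * (sample_mean h0 (m N) x - p0))) t"
  let ?\<phi>1 = "\<lambda>N. char (distr (PiM {..<n N} (\<lambda>_. Q)) borel
                    (\<lambda>y. sqrt (real N) * (sample_mean h1 (n N) y - p1))) t"
  have "?\<phi>0 \<longlonglongrightarrow> complex_of_real (exp (- prob_space.variance P h0 * (sqrt (1 / \<pi>0) * t)\<^sup>2 / 2))"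
    unfolding p0_def using tendsto_real_sqrt[OF N_over_m]
    by (intro prob_space.char_sample_mean_tendsto_gaussian prob_P m_at_top)
      (auto simp: h_bounds real_sqrt_divide)
  moreover have "?\<phi>1 \<longlonglongrightarrow> complex_of_real (exp (- prob_space.variance Q h1 * (sqrt (1 / \<pi>1) * t)\<^sup>2 / 2))"
    unfolding p1_def using tendsto_real_sqrt[OF N_over_n]
    by (intro prob_space.char_sample_mean_tendsto_gaussian prob_Q n_at_top)
      (auto simp: h_bounds real_sqrt_divide)
  ultimately have "(\<lambda>N. ?\<phi>0 N * ?\<phi>1 N)
    \<longlonglongrightarrow> complex_of_real (exp (- (p0 * (1 - p0)) * (sqrt (1 / \<pi>0) * t)\<^sup>2 / 2))
      * complex_of_real (exp (- (p1 * (1 - p1)) * (sqrt (1 / \<pi>1) * t)\<^sup>2 / 2))"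
    unfolding variance_h0 variance_h1 by (rule tendsto_mult)
  also have "complex_of_real (exp (- (p0 * (1 - p0)) * (sqrt (1 / \<pi>0) * t)\<^sup>2 / 2))
      * complex_of_real (exp (- (p1 * (1 - p1)) * (sqrt (1 / \<pi>1) * t)\<^sup>2 / 2))
    = complex_of_real (exp (- (\<tau> * t)\<^sup>2 / 2))"
  proof -
    have "(\<tau> * t)\<^sup>2 = (p0 * (1 - p0) / \<pi>0 + p1 * (1 - p1) / \<pi>1) * t\<^sup>2"
      using variances_nonneg \<pi>0_pos \<pi>1_pos by (simp add: \<tau>_def power_mult_distrib)
    then have "- (p0 * (1 - p0)) * (sqrt (1 / \<pi>0) * t)\<^sup>2 / 2 + - (p1 * (1 - p1)) * (sqrt (1 / \<pi>1) * t)\<^sup>2 / 2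
        = - (\<tau> * t)\<^sup>2 / 2"
      using \<pi>0_pos \<pi>1_pos by (simp add: power_mult_distrib field_simps)
    then show ?thesis
      by (metis exp_add of_real_mult)
  qed
  also have "(\<lambda>N. ?\<phi>0 N * ?\<phi>1 N) = (\<lambda>N. char (distr (\<Omega> N) borel (stat N)) t)"
    unfolding sample_space_def stat_def mean0_def mean1_def
    by (intro ext char_distr_pair_add[symmetric] prob_space_PiM prob_P prob_Q) (simp_all add: sample_mean_def)
  finally show ?thesis .
qed

lemma mean0_converges: "converges_in_prob \<Omega> mean0 p0"
proof (rule converges_in_prob_of_char[OF prob_space_\<Omega> measurable_statistics(1)])
  fix t
  have "(\<lambda>N. 1 / sqrt (real (m N))) \<longlonglongrightarrow> 0"
    using m_at_top by (intro tendsto_divide_0[OF tendsto_const] filterlim_at_top_imp_at_infinity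
        filterlim_compose[OF sqrt_at_top] filterlim_compose[OF filterlim_real_sequentially])
  then have "(\<lambda>N. char (distr (PiM {..<m N} (\<lambda>_. P)) borel (\<lambda>x. 1 * (sample_mean h0 (m N) x - p0))) t)
      \<longlonglongrightarrow> complex_of_real (exp (- prob_space.variance P h0 * (0 * t)\<^sup>2 / 2))"
    unfolding p0_def
    by (intro prob_space.char_sample_mean_tendsto_gaussian prob_P m_at_top) (auto simp: h_bounds)
  then show "(\<lambda>N. char (distr (\<Omega> N) borel (\<lambda>\<omega>. mean0 N \<omega> - p0)) t) \<longlonglongrightarrow> 1"
    unfolding sample_space_def mean0_def
    by (subst char_distr_pair_fst[where F="\<lambda>x. sample_mean h0 (m _) x - p0"])
      (auto intro!: prob_space_PiM prob_P prob_Q simp: sample_mean_def)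
qed

lemma mean1_converges: "converges_in_prob \<Omega> mean1 p1"
proof (rule converges_in_prob_of_char[OF prob_space_\<Omega> measurable_statistics(2)])
  fix t
  have "(\<lambda>N. 1 / sqrt (real (n N))) \<longlonglongrightarrow> 0"
    using n_at_top by (intro tendsto_divide_0[OF tendsto_const] filterlim_at_top_imp_at_infinity
        filterlim_compose[OF sqrt_at_top] filterlim_compose[OF filterlim_real_sequentially])
  then have "(\<lambda>N. char (distr (PiM {..<n N} (\<lambda>_. Q)) borel (\<lambda>x. 1 * (sample_mean h1 (n N) x - p1))) t)
      \<longlonglongrightarrow> complex_of_real (exp (- prob_space.variance Q h1 * (0 * t)\<^sup>2 / 2))"
    unfolding p1_def
    by (intro prob_space.char_sample_mean_tendsto_gaussian prob_Q n_at_top) (auto simp: h_bounds)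
  then show "(\<lambda>N. char (distr (\<Omega> N) borel (\<lambda>\<omega>. mean1 N \<omega> - p1)) t) \<longlonglongrightarrow> 1"
    unfolding sample_space_def mean1_def
    by (subst char_distr_pair_snd[where G="\<lambda>x. sample_mean h1 (n _) x - p1"])
      (auto intro!: prob_space_PiM prob_P prob_Q simp: sample_mean_def)
qed

lemma sd_hat_converges: "converges_in_prob \<Omega> sd_hat \<tau>"
proof -
  define g :: "(real \<times> real) \<times> real \<times> real \<Rightarrow> real"
    where "g z = sqrt (fst (snd z) * (fst (fst z) * (1 - fst (fst z)))
                      + snd (snd z) * (snd (fst z) * (1 - snd (fst z))))" for z
  have means: "converges_in_prob \<Omega> (\<lambda>N \<omega>. (mean0 N \<omega>, mean1 N \<omega>)) (p0, p1)"
    by (rule converges_in_prob_Pair[OF prob_space_\<Omega> _ _ mean0_converges mean1_converges]) measurable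
  have ratios: "converges_in_prob \<Omega> (\<lambda>N \<omega>. (real N / real (m N), real N / real (n N))) (1 / \<pi>0, 1 / \<pi>1)"
    by (rule converges_in_prob_const) (intro tendsto_Pair N_over_m N_over_n)
  have args: "converges_in_prob \<Omega>
      (\<lambda>N \<omega>. ((mean0 N \<omega>, mean1 N \<omega>), (real N / real (m N), real N / real (n N))))
      ((p0, p1), (1 / \<pi>0, 1 / \<pi>1))"
    by (rule converges_in_prob_Pair[OF prob_space_\<Omega> _ _ means ratios]) measurable
  have "isCont g ((p0, p1), (1 / \<pi>0, 1 / \<pi>1))"
    unfolding g_def by (intro continuous_intros)
  from converges_in_prob_compose[OF prob_space_\<Omega> _ args this]
  have "converges_in_prob \<Omega> (\<lambda>N \<omega>. g ((mean0 N \<omega>, mean1 N \<omega>), (real N / real (m N), real N / real (n N))))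
      (g ((p0, p1), (1 / \<pi>0, 1 / \<pi>1)))"
    by measurable
  moreover have "g ((p0, p1), (1 / \<pi>0, 1 / \<pi>1)) = \<tau>"
    by (simp add: g_def \<tau>_def)
  moreover have "(\<lambda>N \<omega>. g ((mean0 N \<omega>, mean1 N \<omega>), (real N / real (m N), real N / real (n N)))) = sd_hat"
    by (simp add: fun_eq_iff g_def sd_hat_def)
  ultimately show ?thesis by simp
qed

lemma variances_eq_0_if_tau_0:
  assumes "\<tau> = 0"
  shows "p0 * (1 - p0) = 0" "p1 * (1 - p1) = 0"
  using assms variances_nonneg \<pi>0_pos \<pi>1_pos by (auto simp: \<tau>_def add_nonneg_eq_0_iff)

lemma AE_h_eq_p_if_tau_0:
  assumes "\<tau> = 0"
  shows "AE x in P. h0 x = p0" "AE y in Q. h1 y = p1"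
proof -
  interpret P: prob_space P by (rule prob_P)
  interpret Q: prob_space Q by (rule prob_Q)
  have "integrable P (\<lambda>x. (h0 x)\<^sup>2)"
    by (intro P.integrable_const_bound[of _ 1] AE_I2) (simp_all add: h_bounds power_le_one)
  moreover have "P.variance h0 = 0"
    using variance_h0 variances_eq_0_if_tau_0[OF assms] by simp
  ultimately show "AE x in P. h0 x = p0"
    unfolding p0_def by (intro P.AE_eq_expectation_of_variance_eq_0) simp_all
  have "integrable Q (\<lambda>y. (h1 y)\<^sup>2)"
    by (intro Q.integrable_const_bound[of _ 1] AE_I2) (simp_all add: h_bounds power_le_one)
  moreover have "Q.variance h1 = 0"
    using variance_h1 variances_eq_0_if_tau_0[OF assms] by simp
  ultimately show "AE y in Q. h1 y = p1"
    unfolding p1_def by (intro Q.AE_eq_expectation_of_variance_eq_0) simp_all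
qed

lemma eventually_prob_stat_gt_eq_0:
  assumes "\<tau> = 0"
  shows "eventually (\<lambda>N. measure (\<Omega> N) {\<omega> \<in> space (\<Omega> N). q * sd_hat N \<omega> < stat N \<omega>} = 0) sequentially"
  using eventually_sizes_pos
proof eventually_elim
  case (elim N)
  interpret \<Omega>: prob_space "\<Omega> N" by (rule prob_space_\<Omega>)
  have A0: "AE x in PiM {..<m N} (\<lambda>_. P). sample_mean h0 (m N) x = p0"
    using elim by (intro AE_sample_mean_eq prob_P AE_h_eq_p_if_tau_0[OF assms]) simp
  have A1: "AE y in PiM {..<n N} (\<lambda>_. Q). sample_mean h1 (n N) y = p1"
    using elim by (intro AE_sample_mean_eq prob_Q AE_h_eq_p_if_tau_0[OF assms]) simp
  have "AE \<omega> in \<Omega> N. sample_mean h0 (m N) (fst \<omega>) = p0 \<and> sample_mean h1 (n N) (snd \<omega>) = p1"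
    unfolding sample_space_def
    by (rule AE_pair_measure_conj[OF prob_space_PiM[OF prob_P] prob_space_PiM[OF prob_Q] _ _ A0 A1])
      measurable
  then have "AE \<omega> in \<Omega> N. \<not> q * sd_hat N \<omega> < stat N \<omega>"
    by eventually_elim (simp add: stat_def sd_hat_def mean0_def mean1_def variances_eq_0_if_tau_0[OF assms])
  then show ?case
    by (subst \<Omega>.prob_eq_0) auto
qed

lemma limsup_prob_stat_gt:
  "limsup (\<lambda>N. ereal (measure (\<Omega> N) {\<omega> \<in> space (\<Omega> N). q * sd_hat N \<omega> < stat N \<omega>}))
     \<le> ereal (1 - std_normal_cdf q)"
proof (cases "\<tau> = 0")
  case True
  then have "limsup (\<lambda>N. ereal (measure (\<Omega> N) {\<omega> \<in> space (\<Omega> N). q * sd_hat N \<omega> < stat N \<omega>})) \<le> 0"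
    using eventually_prob_stat_gt_eq_0[OF True, of q] by (intro Limsup_bounded) (auto elim!: eventually_mono)
  also have "\<dots> \<le> ereal (1 - std_normal_cdf q)"
    using std_normal_cdf_le_1[of q] by simp
  finally show ?thesis .
next
  case False
  then have "0 < \<tau>"
    using variances_nonneg \<pi>0_pos \<pi>1_pos by (simp add: \<tau>_def order_less_le)
  show ?thesis
    by (intro limsup_prob_gt_scaled_le[OF prob_space_\<Omega> _ _ _ \<open>0 < \<tau>\<close> sd_hat_converges]
        cdf_tendsto_of_char_gaussian[OF prob_space_\<Omega> _ char_stat_tendsto \<open>0 < \<tau>\<close>]) measurable
qed

lemma p0_add_p1_le_TV:
  assumes "sets P = sets Q" and "B \<in> sets P"
    and "\<And>x. x \<in> space P \<Longrightarrow> h0 x = 1 - indicator B x" and "\<And>x. x \<in> space P \<Longrightarrow> h1 x = indicator B x"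
  shows "p0 + p1 - 1 \<le> TV P Q"
proof -
  interpret P: prob_space P by (rule prob_P)
  interpret Q: prob_space Q by (rule prob_Q)
  have "space Q = space P" "B \<in> sets Q"
    using assms(1,2) sets_eq_imp_space_eq by auto
  have "p0 = integral\<^sup>L P (\<lambda>x. 1 - indicator B x)"
    unfolding p0_def using assms(3) by (intro Bochner_Integration.integral_cong) auto
  also have "\<dots> = 1 - measure P B"
    using assms(2) by (subst Bochner_Integration.integral_diff) (auto simp: P.prob_space less_top[symmetric])
  finally have "p0 = 1 - measure P B" .
  have "p1 = integral\<^sup>L Q (indicator B)"
    unfolding p1_def using assms(4) \<open>space Q = space P\<close> by (intro Bochner_Integration.integral_cong) auto
  also have "\<dots> = measure Q B"
    using \<open>B \<in> sets Q\<close> by simp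
  finally have "p1 = measure Q B" .
  moreover note \<open>p0 = 1 - measure P B\<close>
  moreover have "\<bar>measure P A - measure Q A\<bar> \<le> 1" for A
    unfolding abs_le_iff using P.prob_le_1[of A] Q.prob_le_1[of A] measure_nonneg[of P A] measure_nonneg[of Q A]
    by linarith
  then have "\<bar>measure P B - measure Q B\<bar> \<le> TV P Q"
    unfolding TV_def using assms(2) by (intro cSUP_upper bdd_aboveI[of _ 1]) auto
  ultimately show ?thesis by linarith
qed

lemma stat_gt_of_lambda_bayes_hat_gt:
  assumes "h0 = (\<lambda>x. 1 - of_bool (1/2 < \<rho> x))" and "h1 = (\<lambda>x. of_bool (1/2 < \<rho> x))"
    and "0 < N" and "p0 + p1 - 1 \<le> c" and "c < lambda_bayes_hat \<alpha> \<rho> (m N) (n N) (fst \<omega>) (snd \<omega>)"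
  shows "std_normal_quantile (1 - \<alpha>) * sd_hat N \<omega> < stat N \<omega>"
proof -
  define \<sigma> where "\<sigma> = sqrt (mean0 N \<omega> * (1 - mean0 N \<omega>) / real (m N) + mean1 N \<omega> * (1 - mean1 N \<omega>) / real (n N))"
  have "A0_hat \<rho> (m N) (fst \<omega>) = mean0 N \<omega>" "A1_hat \<rho> (n N) (snd \<omega>) = mean1 N \<omega>"
    unfolding A0_hat_def A1_hat_def mean0_def mean1_def sample_mean_def by (simp_all add: assms(1,2))
  then have "lambda_bayes_hat \<alpha> \<rho> (m N) (n N) (fst \<omega>) (snd \<omega>)
      = mean0 N \<omega> + mean1 N \<omega> - 1 - std_normal_quantile (1 - \<alpha>) * \<sigma>"
    unfolding lambda_bayes_hat_def Let_def \<sigma>_def by simp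
  with assms(4,5) have "std_normal_quantile (1 - \<alpha>) * \<sigma> < (mean0 N \<omega> - p0) + (mean1 N \<omega> - p1)"
    by simp
  then have "sqrt N * (std_normal_quantile (1 - \<alpha>) * \<sigma>) < sqrt N * ((mean0 N \<omega> - p0) + (mean1 N \<omega> - p1))"
    using \<open>0 < N\<close> by (intro mult_strict_left_mono) auto
  moreover have "sd_hat N \<omega> = sqrt N * \<sigma>"
    by (simp add: \<sigma>_def sd_hat_def real_sqrt_mult[symmetric] distrib_left)
  ultimately show ?thesis
    by (simp add: stat_def algebra_simps)
qed


lemma limsup_prob_lambda_bayes_hat_gt:
  assumes h0: "h0 = (\<lambda>x. 1 - of_bool (1/2 < \<rho> x))" and h1: "h1 = (\<lambda>x. of_bool (1/2 < \<rho> x))"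
    and "p0 + p1 - 1 \<le> c" and "0 < \<alpha>" and "\<alpha> < 1"
  shows "limsup (\<lambda>N. ereal (measure (\<Omega> N)
            {\<omega> \<in> space (\<Omega> N). c < lambda_bayes_hat \<alpha> \<rho> (m N) (n N) (fst \<omega>) (snd \<omega>)}))
         \<le> ereal \<alpha>"
proof -
  let ?q = "std_normal_quantile (1 - \<alpha>)"
  have "eventually (\<lambda>N.
      ereal (measure (\<Omega> N) {\<omega> \<in> space (\<Omega> N). c < lambda_bayes_hat \<alpha> \<rho> (m N) (n N) (fst \<omega>) (snd \<omega>)})
      \<le> ereal (measure (\<Omega> N) {\<omega> \<in> space (\<Omega> N). ?q * sd_hat N \<omega> < stat N \<omega>})) sequentially"
    using eventually_gt_at_top[of "0::nat"]
  proof eventually_elim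
    case (elim N)
    interpret \<Omega>: prob_space "\<Omega> N" by (rule prob_space_\<Omega>)
    have "{\<omega> \<in> space (\<Omega> N). c < lambda_bayes_hat \<alpha> \<rho> (m N) (n N) (fst \<omega>) (snd \<omega>)}
        \<subseteq> {\<omega> \<in> space (\<Omega> N). ?q * sd_hat N \<omega> < stat N \<omega>}"
      using stat_gt_of_lambda_bayes_hat_gt[OF h0 h1 elim assms(3)] by auto
    then show ?case
      by (simp add: \<Omega>.finite_measure_mono)
  qed
  then have "limsup (\<lambda>N. ereal (measure (\<Omega> N)
        {\<omega> \<in> space (\<Omega> N). c < lambda_bayes_hat \<alpha> \<rho> (m N) (n N) (fst \<omega>) (snd \<omega>)}))
      \<le> limsup (\<lambda>N. ereal (measure (\<Omega> N) {\<omega> \<in> space (\<Omega> N). ?q * sd_hat N \<omega> < stat N \<omega>}))"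
    by (rule Limsup_mono)
  also have "\<dots> \<le> ereal (1 - std_normal_cdf ?q)"
    by (rule limsup_prob_stat_gt)
  also have "1 - std_normal_cdf ?q = \<alpha>"
    using std_normal_cdf_quantile[of "1 - \<alpha>"] assms(4,5) by simp
  finally show ?thesis .
qed
end

theorem proposition3:
  fixes P Q :: "'a measure" and \<rho> :: "'a \<Rightarrow> real"
    and m n :: "nat \<Rightarrow> nat" and \<pi> \<alpha> :: real
  assumes "prob_space P" and "prob_space Q" and "sets P = sets Q"
    and "\<rho> \<in> borel_measurable P"
    and "\<forall>x \<in> space P. 0 \<le> \<rho> x \<and> \<rho> x \<le> 1"
    and "\<forall>N\<ge>2. 0 < m N \<and> 0 < n N \<and> m N + n N = N \<and> m N \<le> n N"
    and "(\<lambda>N. real (m N) / real N) \<longlonglongrightarrow> \<pi>" and "0 < \<pi>" and "\<pi> < 1"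
    and "0 < \<alpha>" and "\<alpha> < 1"
  shows "limsup (\<lambda>N. ereal (measure (sample_space P Q (m N) (n N))
            {\<omega> \<in> space (sample_space P Q (m N) (n N)).
               lambda_bayes_hat \<alpha> \<rho> (m N) (n N) (fst \<omega>) (snd \<omega>) > TV P Q}))
         \<le> ereal \<alpha>"
proof -
  define h0 :: "'a \<Rightarrow> real" where "h0 = (\<lambda>x. 1 - of_bool (1/2 < \<rho> x))"
  define h1 :: "'a \<Rightarrow> real" where "h1 = (\<lambda>x. of_bool (1/2 < \<rho> x))"
  note [measurable] = assms(4)
  have [measurable]: "\<rho> \<in> borel_measurable Q"
    using assms(3,4) measurable_cong_sets by blast
  have "eventually (\<lambda>N. m N + n N = N) sequentially"
    using assms(6) unfolding eventually_sequentially by (intro exI[of _ 2]) simp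
  then have "(\<lambda>N. real (n N) / real N) \<longlonglongrightarrow> 1 - \<pi>"
    using assms(7) by (rule tendsto_ratio_complement)
  then interpret two_sample_bernoulli P Q h0 h1 m n \<pi> "1 - \<pi>"
  proof (intro two_sample_bernoulli.intro assms(1,2,7,8))
    show "h0 \<in> borel_measurable P" "h1 \<in> borel_measurable Q"
      unfolding h0_def h1_def by measurable
  qed (simp_all add: h0_def h1_def assms(9))
  have "{x \<in> space P. 1/2 < \<rho> x} \<in> sets P"
    by measurable
  then have "p0 + p1 - 1 \<le> TV P Q"
    by (rule p0_add_p1_le_TV[OF assms(3)]) (simp_all add: h0_def h1_def)
  then show ?thesis
    using assms(10,11) by (rule limsup_prob_lambda_bayes_hat_gt[OF h0_def h1_def])
qed

end
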